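(* (General exclusion rule for composite spin.) Consider a two-particle state of two particles with the same spin $s$, with total spin $S$ and total third component $M$, formed in a common canonical spin quantization frame as $$|S,M:(Q_a,\mathbf{p}_a,s)^1;(Q_b,\mathbf{p}_b,s)^2\rangle^C=\sum_{m_a,m_b}C^{ssS}_{m_a m_b M}\,|(Q_a,\mathbf{p}_a,s,m_a)^1;(Q_b,\mathbf{p}_b,s,m_b)^2\rangle^C .$$ Suppose all other quantum numbers of the two particles are identical: $\mathbf{p}_a=\mathbf{p}_b$ and $Q_a=Q_b$. Then the state vector vanishes whenever $S$ is odd. Hence only states of even total spin $S$ are allowed, for bosons and fermions alike. For $s=1/2$ this is the Pauli exclusion principle.
   Context: $C^{ssS}_{m_a m_b M}$ are the Clebsch–Gordan coefficients for coupling two spins $s$ to total spin $S$. They satisfy $C^{ssS}_{m_am_bM}=(-1)^{S-2s}C^{ssS}_{m_bm_aM}$. $|(Q_a,\mathbf{p}_a,s_a,m_a)^1;(Q_b,\mathbf{p}_b,s_b,m_b)^2\rangle^C$ denotes a single-valued but order-dependent two-particle state vector. In it, $Q$ denotes the intrinsic quantum numbers (rest mass, charge, etc.), $\mathbf{p}$ the momentum, $s$ the spin, and $m$ the third component of spin in a common canonical frame. Particle "1" has its spin frame rotation from its base frame into the canonical frame fixed as $R_a$, and particle "2"'s rotation is defined relative to it as $R_a R_{21}$ with $R_{21}=R_{\hat{\mathbf{k}}}(\pm\pi)$, a rotation by $\pi$ about the axis $\hat{\mathbf{k}}$ bisecting the two momenta. Under exchange of the variables $a\leftrightarrow b$, keeping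 the labels $1,2$ fixed, these vectors satisfy $$|(Q_b,\mathbf{p}_b,s_b,m_b)^1;(Q_a,\mathbf{p}_a,s_a,m_a)^2\rangle^C=(-1)^{2s_a}|(Q_a,\mathbf{p}_a,s_a,m_a)^1;(Q_b,\mathbf{p}_b,s_b,m_b)^2\rangle^C .$$ *)

theory Defs
  imports "HOL-Analysis.Analysis"
begin

definition is_spin :: "real \<Rightarrow> bool" where
  "is_spin s \<longleftrightarrow> 2 * s \<in> \<nat>"

definition projections :: "real \<Rightarrow> real set" where
  "projections s = {- s + real k | k. real k \<le> 2 * s}"

definition phase :: "real \<Rightarrow> real" where
  "phase x = (-1) powi \<lfloor>x\<rfloor>"

text \<open>Order-dependent two-particle kets are modelled by a function
  ket Qa pa sa ma Qb pb sb mb = |(Qa,pa,sa,ma)^1;(Qb,pb,sb,mb)^2>^C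
  with values in a complex vector space.
  Clebsch-Gordan coefficients: CG j1 j2 J m1 m2 M = C^{j1 j2 J}_{m1 m2 M}.\<close>

definition coupled_state ::
  "(real \<Rightarrow> real \<Rightarrow> real \<Rightarrow> real \<Rightarrow> real \<Rightarrow> real \<Rightarrow> real)
   \<Rightarrow> ('q \<Rightarrow> real^3 \<Rightarrow> real \<Rightarrow> real \<Rightarrow> 'q \<Rightarrow> real^3 \<Rightarrow> real \<Rightarrow> real \<Rightarrow> 'v::real_vector)
   \<Rightarrow> real \<Rightarrow> real \<Rightarrow> 'q \<Rightarrow> real^3 \<Rightarrow> real \<Rightarrow> 'q \<Rightarrow> real^3 \<Rightarrow> 'v" where
  "coupled_state CG ket S M Qa pa s Qb pb =
     (\<Sum>ma\<in>projections s. \<Sum>mb\<in>projections s.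
        CG s s S ma mb M *\<^sub>R ket Qa pa s ma Qb pb s mb)"

end

theory Submission
  imports Defs
begin

text \<open>For identical momenta and intrinsic quantum numbers, swapping the summation indices
  of the coupled state and then using the symmetry of the Clebsch-Gordan coefficients and
  the exchange law of the kets multiplies each term by
  (-1)^(S-2s) (-1)^(2s) = (-1)^S. For odd S the double sum therefore equals its own
  negative, so it vanishes.\<close>

lemma phase_add:
  assumes "x \<in> \<int>" and "y \<in> \<int>"
  shows "phase (x + y) = phase x * phase y"
proof -
  from assms obtain i j where "x = of_int i" and "y = of_int j"
    by (auto elim!: Ints_cases)
  then show ?thesis
    unfolding phase_def by (simp flip: of_int_add add: power_int_add)
qed

lemma phase_of_nat_odd: "odd n \<Longrightarrow> phase (real n) = -1"
  unfolding phase_def by (simp add: power_int_of_nat)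

lemma is_spin_double_Ints: "is_spin s \<Longrightarrow> 2 * s \<in> \<int>"
  unfolding is_spin_def by (auto elim!: Nats_cases)

lemma sum_sum_antisymmetric_eq_0:
  fixes f :: "'a \<Rightarrow> 'a \<Rightarrow> 'v::real_vector"
  assumes antisym: "\<And>a b. a \<in> A \<Longrightarrow> b \<in> A \<Longrightarrow> f a b = - f b a"
  shows "(\<Sum>a\<in>A. \<Sum>b\<in>A. f a b) = 0"
proof -
  let ?X = "\<Sum>a\<in>A. \<Sum>b\<in>A. f a b"
  have "?X = (\<Sum>b\<in>A. \<Sum>a\<in>A. f a b)"
    by (rule sum.swap)
  also have "\<dots> = (\<Sum>b\<in>A. \<Sum>a\<in>A. - f b a)"
    by (auto intro!: sum.cong antisym)
  also have "\<dots> = - ?X"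
    by (simp add: sum_negf)
  finally show ?thesis
    by (simp add: eq_neg_iff_add_eq_0 flip: scaleR_2)
qed

theorem mainTheorem2:
  fixes CG :: "real \<Rightarrow> real \<Rightarrow> real \<Rightarrow> real \<Rightarrow> real \<Rightarrow> real \<Rightarrow> real"
    and ket :: "'q \<Rightarrow> real^3 \<Rightarrow> real \<Rightarrow> real \<Rightarrow> 'q \<Rightarrow> real^3 \<Rightarrow> real \<Rightarrow> real \<Rightarrow> 'v::real_vector"
    and s :: real and S :: nat and M :: real
    and Qa Qb :: 'q and pa pb :: "real^3"
  assumes spin: "is_spin s"
    and CG_sym: "\<And>ma mb. ma \<in> projections s \<Longrightarrow> mb \<in> projections s \<Longrightarrow>
                   CG s s (real S) ma mb M = phase (real S - 2 * s) * CG s s (real S) mb ma M"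
    and exchange: "\<And>Q1 p1 s1 m1 Q2 p2 s2 m2.
                   is_spin s1 \<Longrightarrow> is_spin s2 \<Longrightarrow> m1 \<in> projections s1 \<Longrightarrow> m2 \<in> projections s2 \<Longrightarrow>
                   ket Q2 p2 s2 m2 Q1 p1 s1 m1 = phase (2 * s1) *\<^sub>R ket Q1 p1 s1 m1 Q2 p2 s2 m2"
    and same_p: "pa = pb" and same_Q: "Qa = Qb"
    and S_odd: "odd S"
  shows "coupled_state CG ket (real S) M Qa pa s Qb pb = 0"
proof -
  have "phase (real S - 2 * s) * phase (2 * s) = phase (real S)"
    using phase_add[of "real S - 2 * s" "2 * s"] is_spin_double_Ints[OF spin] by simp
  also have "\<dots> = -1"
    using S_odd by (rule phase_of_nat_odd)
  finally have total_phase: "phase (real S - 2 * s) * phase (2 * s) = -1" .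
  let ?term = "\<lambda>a b. CG s s (real S) a b M *\<^sub>R ket Qa pa s a Qa pa s b"
  have "?term a b = - ?term b a" if "a \<in> projections s" and "b \<in> projections s" for a b
  proof -
    have "?term a b = (phase (real S - 2 * s) * CG s s (real S) b a M)
                        *\<^sub>R (phase (2 * s) *\<^sub>R ket Qa pa s b Qa pa s a)"
      using CG_sym[OF that] exchange[OF spin spin that(2,1), of Qa pa Qa pa] by simp
    also have "\<dots> = (phase (real S - 2 * s) * phase (2 * s)) *\<^sub>R ?term b a"
      by (simp add: ac_simps)
    finally show ?thesis
      using total_phase by simp
  qed
  then show ?thesis
    unfolding coupled_state_def same_p [symmetric] same_Q [symmetric]
    by (rule sum_sum_antisymmetric_eq_0)
qed

end
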